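(* Let $G>I$ be a finite group with $Z(G)=I$ and $\sigma_1,\sigma_2\in G$ with $G=\langle\sigma_1,\sigma_2\rangle$, $o(\sigma_1\sigma_2\sigma_1)=2$, $\sigma_1\sigma_2\sigma_1=\sigma_2\sigma_1\sigma_2$, $C=[\sigma_1]$, $D=[\sigma_2\sigma_1]$, and $[\underline{\sigma}]=[\sigma_1,\sigma_2,\sigma_1,\sigma_1,\sigma_2\sigma_1]$. Then $Z_9=[\underline{\sigma}]^{B_5}\subseteq\Sigma^i(C,C,C,C,D)$ is an orbit of length $9$ under the action of $B_5$ such that $\rho_5(\beta_{ij})$ has cycle type $(1)^3(3)^2$ for $1\le i<j\le 4$, $\rho_5(\beta_{i5})$ has cycle type $(1)(2)^4$ for $1\le i<5$, $\rho_5(B_5)\cong((C_3\times C_3)\rtimes Q_8)\rtimes C_3$, and the genus is $g_{Z_9}=0$.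
   Context: $\iota$ is the identity and $I$ the trivial group; $Q_8$ is the quaternion group of order $8$. For conjugacy classes $C_1,\dots,C_m$, $\Sigma^i(C_1,\dots,C_m)$ is the set of $G$-conjugacy classes $[\sigma_1,\dots,\sigma_m]$ (simultaneous conjugation) of tuples with $\sigma_j\in C_j$, $\langle\sigma_1,\dots,\sigma_m\rangle=G$, $\sigma_1\cdots\sigma_m=\iota$. The Hurwitz braid group $H_m$ generated by $\beta_2,\dots,\beta_m$ acts from the right by $[\underline{\sigma}]^{\beta_i}=[\sigma_1,\dots,\sigma_{i-2},\sigma_{i-1}\sigma_i\sigma_{i-1}^{-1},\sigma_{i-1},\sigma_{i+1},\dots,\sigma_m]$. The pure braid group $B_m$ is generated by $\beta_{ij}=\beta_{i+1}^{-1}\cdots\beta_{j-1}^{-1}\beta_j^2\beta_{j-1}\cdots\beta_{i+1}$, $1\le i<j\le m$, and $\rho_m$ is the induced permutation representation on the orbit. For a $B_m$-orbit $Z$, $g_Z=1-|Z|+\frac12\big((m-1)|Z|-\sum_{j=2}^m z_{1j}\big)$ with $z_{1j}$ the number of cycles (fixed points included) of $\rho_m(\beta_{1j})$ on $Z$. *)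

theory Defs
  imports "HOL-Algebra.Algebra" "HOL-Library.Multiset"
begin

definition center :: "('a, 'b) monoid_scheme \<Rightarrow> 'a set" where
  "center G = {z \<in> carrier G. \<forall>g \<in> carrier G. z \<otimes>\<^bsub>G\<^esub> g = g \<otimes>\<^bsub>G\<^esub> z}"

definition conj_class :: "('a, 'b) monoid_scheme \<Rightarrow> 'a \<Rightarrow> 'a set" where
  "conj_class G x = {g \<otimes>\<^bsub>G\<^esub> x \<otimes>\<^bsub>G\<^esub> inv\<^bsub>G\<^esub> g | g. g \<in> carrier G}"

definition tuple_prod :: "('a, 'b) monoid_scheme \<Rightarrow> 'a list \<Rightarrow> 'a" where
  "tuple_prod G xs = foldr (\<lambda>x acc. x \<otimes>\<^bsub>G\<^esub> acc) xs \<one>\<^bsub>G\<^esub>"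

definition tuple_class :: "('a, 'b) monoid_scheme \<Rightarrow> 'a list \<Rightarrow> 'a list set" where
  "tuple_class G s = {map (\<lambda>x. g \<otimes>\<^bsub>G\<^esub> x \<otimes>\<^bsub>G\<^esub> inv\<^bsub>G\<^esub> g) s | g. g \<in> carrier G}"

definition Sigma_i :: "('a, 'b) monoid_scheme \<Rightarrow> 'a set list \<Rightarrow> 'a list set set" where
  "Sigma_i G Cs = {tuple_class G s | s. length s = length Cs
      \<and> (\<forall>j < length Cs. s ! j \<in> Cs ! j)
      \<and> set s \<subseteq> carrier G
      \<and> generate G (set s) = carrier G
      \<and> tuple_prod G s = \<one>\<^bsub>G\<^esub>}"

text \<open>A letter (i, True) is beta_i, (i, False) is beta_i^{-1}, for 2 <= i <= m (1-based indices).
  beta_i: (.., s_{i-1}, s_i, ..) |-> (.., s_{i-1} s_i s_{i-1}^{-1}, s_{i-1}, ..).\<close>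
definition hur_letter :: "('a, 'b) monoid_scheme \<Rightarrow> nat \<times> bool \<Rightarrow> 'a list \<Rightarrow> 'a list" where
  "hur_letter G l s = (let i = fst l; a = s ! (i - 2); b = s ! (i - 1) in
     if 2 \<le> i \<and> i \<le> length s then
       (if snd l then s[i - 2 := a \<otimes>\<^bsub>G\<^esub> b \<otimes>\<^bsub>G\<^esub> inv\<^bsub>G\<^esub> a, i - 1 := a]
        else s[i - 2 := b, i - 1 := inv\<^bsub>G\<^esub> b \<otimes>\<^bsub>G\<^esub> a \<otimes>\<^bsub>G\<^esub> b])
     else s)"

definition hur_word :: "('a, 'b) monoid_scheme \<Rightarrow> (nat \<times> bool) list \<Rightarrow> 'a list \<Rightarrow> 'a list" where
  "hur_word G w s = fold (hur_letter G) w s"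

text \<open>Action on simultaneous conjugacy classes (images of classes are classes).\<close>
definition hur_word_cls :: "('a, 'b) monoid_scheme \<Rightarrow> (nat \<times> bool) list \<Rightarrow> 'a list set \<Rightarrow> 'a list set" where
  "hur_word_cls G w Y = image (hur_word G w) Y"

definition beta_word :: "nat \<Rightarrow> nat \<Rightarrow> (nat \<times> bool) list" where
  "beta_word i j = map (\<lambda>k. (k, False)) [i+1..<j] @ [(j, True), (j, True)]
                   @ map (\<lambda>k. (k, True)) (rev [i+1..<j])"

definition inv_word :: "(nat \<times> bool) list \<Rightarrow> (nat \<times> bool) list" where
  "inv_word w = rev (map (\<lambda>(k, e). (k, \<not> e)) w)"

inductive_set pure_orbit :: "('a, 'b) monoid_scheme \<Rightarrow> nat \<Rightarrow> 'a list set \<Rightarrow> 'a list set set"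
  for G m Y0 where
  base: "Y0 \<in> pure_orbit G m Y0"
| step: "Y \<in> pure_orbit G m Y0 \<Longrightarrow> 1 \<le> i \<Longrightarrow> i < j \<Longrightarrow> j \<le> m
          \<Longrightarrow> hur_word_cls G (beta_word i j) Y \<in> pure_orbit G m Y0"
| step_inv: "Y \<in> pure_orbit G m Y0 \<Longrightarrow> 1 \<le> i \<Longrightarrow> i < j \<Longrightarrow> j \<le> m
          \<Longrightarrow> hur_word_cls G (inv_word (beta_word i j)) Y \<in> pure_orbit G m Y0"

definition rho_beta :: "('a, 'b) monoid_scheme \<Rightarrow> 'a list set set \<Rightarrow> nat \<Rightarrow> nat \<Rightarrow> 'a list set \<Rightarrow> 'a list set" where
  "rho_beta G Z i j = restrict (hur_word_cls G (beta_word i j)) Z"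

definition rho_image :: "('a, 'b) monoid_scheme \<Rightarrow> nat \<Rightarrow> 'a list set set \<Rightarrow> ('a list set \<Rightarrow> 'a list set) monoid" where
  "rho_image G m Z = (BijGroup Z)\<lparr>carrier := generate (BijGroup Z)
      {rho_beta G Z i j | i j. 1 \<le> i \<and> i < j \<and> j \<le> m}\<rparr>"

definition cycles_of :: "('c \<Rightarrow> 'c) \<Rightarrow> 'c set \<Rightarrow> 'c set set" where
  "cycles_of f Z = {{(f ^^ n) x | n. True} | x. x \<in> Z}"

text \<open>Cycle type as the multiset of cycle lengths (fixed points counted as 1-cycles).\<close>
definition cycle_type :: "('c \<Rightarrow> 'c) \<Rightarrow> 'c set \<Rightarrow> nat multiset" where
  "cycle_type f Z = image_mset card (mset_set (cycles_of f Z))"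

definition num_cycles :: "('c \<Rightarrow> 'c) \<Rightarrow> 'c set \<Rightarrow> nat" where
  "num_cycles f Z = card (cycles_of f Z)"

definition genus :: "('a, 'b) monoid_scheme \<Rightarrow> nat \<Rightarrow> 'a list set set \<Rightarrow> real" where
  "genus G m Z = 1 - real (card Z) + ((real m - 1) * real (card Z)
      - (\<Sum>j = 2..m. real (num_cycles (rho_beta G Z 1 j) Z))) / 2"

section \<open>The group ((C3 x C3) : Q8) : C3 = ASL(2,3)\<close>

definition F3sq :: "(int \<times> int) set" where
  "F3sq = {0..2} \<times> {0..2}"

definition ASL23 :: "((int \<times> int) \<Rightarrow> (int \<times> int)) monoid" where
  "ASL23 = (BijGroup F3sq)\<lparr>carrier :=
     {restrict (\<lambda>(x, y). ((a * x + b * y + e) mod 3, (c * x + d * y + f) mod 3)) F3sq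
       | a b c d e f :: int. (a * d - b * c) mod 3 = 1}\<rparr>"

end

(* Put a = s1 s2 s1 and b = s1 s2.  The braid relation and o(a) = 2 give a^2 = b^3 = 1, and a, b
   generate G, so every element of G is a word in a and b and the Hurwitz action on tuples of such
   words can be followed symbolically, cancelling aa and bbb.  Starting from the given tuple this
   yields nine tuples, labelled by the points of F_3^2, such that beta_ij sends the class labelled p
   to the class labelled A_ij p, for explicit affine maps A_ij of determinant 1 and explicit
   conjugating words.  The nine classes are distinct: simultaneous conjugation preserves which
   entries of a tuple coincide, and for any two labels some coincidence in one tuple fails in the
   other, because a conjugate of the corresponding quotient of entries reduces to ab(ba)^-1, which
   is not 1 as G, having trivial centre, is not abelian.  So rho_5(B_5) is the permutation group of
   F_3^2 generated by the A_ij, which is ASL(2,3) = ((C3 x C3) : Q8) : C3; the cycle types are those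
   of the A_ij, and the genus formula gives 0. *)
theory Submission
  imports Defs
begin

section \<open>The Hurwitz action and simultaneous conjugation\<close>

lemma hur_letter_True:
  "Suc (Suc k) \<le> length s \<Longrightarrow>
   hur_letter G (Suc (Suc k), True) s = s[k := s ! k \<otimes>\<^bsub>G\<^esub> s ! Suc k \<otimes>\<^bsub>G\<^esub> inv\<^bsub>G\<^esub> (s ! k), Suc k := s ! k]"
  by (simp add: hur_letter_def Let_def)

lemma hur_letter_False:
  "Suc (Suc k) \<le> length s \<Longrightarrow>
   hur_letter G (Suc (Suc k), False) s = s[k := s ! Suc k, Suc k := inv\<^bsub>G\<^esub> (s ! Suc k) \<otimes>\<^bsub>G\<^esub> s ! k \<otimes>\<^bsub>G\<^esub> s ! Suc k]"
  by (simp add: hur_letter_def Let_def)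

lemma hur_letter_out_of_range:
  "\<not> (2 \<le> fst l \<and> fst l \<le> length s) \<Longrightarrow> hur_letter G l s = s"
  by (auto simp: hur_letter_def Let_def)

lemma hur_letter_cases [case_names in_range out_of_range]:
  obtains k where "l = (Suc (Suc k), snd l)" "Suc (Suc k) \<le> length s"
  | "\<not> (2 \<le> fst l \<and> fst l \<le> length s)"
  by (metis add_2_eq_Suc le_Suc_ex prod.collapse)

lemma hur_word_Nil [simp]: "hur_word G [] s = s"
  by (simp add: hur_word_def)

lemma hur_word_Cons [simp]: "hur_word G (l # w) s = hur_word G w (hur_letter G l s)"
  by (simp add: hur_word_def)

lemma hur_word_append: "hur_word G (u @ v) s = hur_word G v (hur_word G u s)"
  by (simp add: hur_word_def)

lemma inv_word_Cons: "inv_word (l # w) = inv_word w @ [(fst l, \<not> snd l)]"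
  by (cases l) (simp add: inv_word_def)

definition conjugate :: "('a, 'b) monoid_scheme \<Rightarrow> 'a \<Rightarrow> 'a \<Rightarrow> 'a" where
  "conjugate G g x = g \<otimes>\<^bsub>G\<^esub> x \<otimes>\<^bsub>G\<^esub> inv\<^bsub>G\<^esub> g"

context group
begin

lemma conjugate_closed [simp]: "g \<in> carrier G \<Longrightarrow> x \<in> carrier G \<Longrightarrow> conjugate G g x \<in> carrier G"
  by (simp add: conjugate_def)

lemma inv_conjugate: "g \<in> carrier G \<Longrightarrow> x \<in> carrier G \<Longrightarrow> inv (conjugate G g x) = conjugate G g (inv x)"
  by (simp add: conjugate_def inv_mult_group m_assoc)

lemma conjugate_mult:
  "g \<in> carrier G \<Longrightarrow> x \<in> carrier G \<Longrightarrow> y \<in> carrier G \<Longrightarrow>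
   conjugate G g x \<otimes> conjugate G g y = conjugate G g (x \<otimes> y)"
  by (simp add: conjugate_def m_assoc flip: m_assoc[of "inv g" g])

lemma conjugate_conjugate:
  "g \<in> carrier G \<Longrightarrow> h \<in> carrier G \<Longrightarrow> x \<in> carrier G \<Longrightarrow>
   conjugate G h (conjugate G g x) = conjugate G (h \<otimes> g) x"
  by (simp add: conjugate_def m_assoc inv_mult_group)

lemma conjugate_one [simp]: "x \<in> carrier G \<Longrightarrow> conjugate G \<one> x = x"
  by (simp add: conjugate_def)

lemma conjugate_in_conj_class: "g \<in> carrier G \<Longrightarrow> conjugate G g x \<in> conj_class G x"
  by (auto simp: conjugate_def conj_class_def)

lemma self_in_conj_class: "x \<in> carrier G \<Longrightarrow> x \<in> conj_class G x"
  using conjugate_in_conj_class[of \<one> x] by simp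

lemma hur_letter_closed: "set s \<subseteq> carrier G \<Longrightarrow> set (hur_letter G l s) \<subseteq> carrier G"
proof (cases l s rule: hur_letter_cases)
  case (in_range k)
  moreover assume "set s \<subseteq> carrier G"
  moreover have "s ! k \<in> set s" "s ! Suc k \<in> set s" using in_range by auto
  ultimately show ?thesis
    by (cases "snd l") (simp_all add: hur_letter_True hur_letter_False set_update_subsetI subsetD)
qed (simp add: hur_letter_out_of_range)

lemma hur_letter_conjugate:
  assumes "set s \<subseteq> carrier G" "g \<in> carrier G"
  shows "hur_letter G l (map (conjugate G g) s) = map (conjugate G g) (hur_letter G l s)"
proof (cases l s rule: hur_letter_cases)
  case (in_range k)
  moreover have "s ! k \<in> carrier G" "s ! Suc k \<in> carrier G" using in_range assms by auto
  ultimately show ?thesis using assms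
    by (cases "snd l") (auto simp: hur_letter_True hur_letter_False map_update inv_conjugate conjugate_mult)
qed (simp add: hur_letter_out_of_range)

lemma hur_letter_inverse:
  assumes "set s \<subseteq> carrier G"
  shows "hur_letter G (i, \<not> e) (hur_letter G (i, e) s) = s"
proof (cases "(i, e)" s rule: hur_letter_cases)
  case (in_range k)
  moreover have x: "s ! k \<in> carrier G" and y: "s ! Suc k \<in> carrier G" using in_range assms by auto
  moreover have "inv (s ! k) \<otimes> (s ! k \<otimes> s ! Suc k) = s ! Suc k"
    and "s ! Suc k \<otimes> (inv (s ! Suc k) \<otimes> s ! k) = s ! k"
    using x y by (simp_all flip: m_assoc)
  ultimately show ?thesis
    by (cases e) (simp_all add: hur_letter_True hur_letter_False m_assoc list_update_swap[of k "Suc k"])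
qed (simp add: hur_letter_out_of_range)

lemma hur_word_closed: "set s \<subseteq> carrier G \<Longrightarrow> set (hur_word G w s) \<subseteq> carrier G"
  by (induction w arbitrary: s) (simp_all add: hur_letter_closed)

lemma hur_word_conjugate:
  "set s \<subseteq> carrier G \<Longrightarrow> g \<in> carrier G \<Longrightarrow>
   hur_word G w (map (conjugate G g) s) = map (conjugate G g) (hur_word G w s)"
  by (induction w arbitrary: s) (simp_all add: hur_letter_conjugate hur_letter_closed)

lemma hur_word_inv_word: "set s \<subseteq> carrier G \<Longrightarrow> hur_word G (inv_word w) (hur_word G w s) = s"
proof (induction w arbitrary: s)
  case (Cons l w)
  then show ?case
    using hur_letter_inverse[of s "fst l" "snd l"]
    by (simp add: inv_word_Cons hur_word_append hur_letter_closed)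
qed (simp add: inv_word_def)

lemma tuple_class_conv: "tuple_class G s = (\<lambda>g. map (conjugate G g) s) ` carrier G"
  by (auto simp: tuple_class_def conjugate_def)

lemma hur_word_cls_tuple_class:
  "set s \<subseteq> carrier G \<Longrightarrow> hur_word_cls G w (tuple_class G s) = tuple_class G (hur_word G w s)"
  by (simp add: hur_word_cls_def tuple_class_conv image_image hur_word_conjugate)

lemma hur_word_cls_inv_word:
  "set s \<subseteq> carrier G \<Longrightarrow>
   hur_word_cls G (inv_word w) (hur_word_cls G w (tuple_class G s)) = tuple_class G s"
  by (simp add: hur_word_cls_tuple_class hur_word_closed hur_word_inv_word)

lemma tuple_class_map_conjugate:
  assumes "set s \<subseteq> carrier G" "g \<in> carrier G"
  shows "tuple_class G (map (conjugate G g) s) = tuple_class G s"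
proof -
  have "(\<lambda>h. h \<otimes> g) ` carrier G = carrier G"
  proof (intro equalityI subsetI)
    fix x assume "x \<in> carrier G"
    with assms(2) show "x \<in> (\<lambda>h. h \<otimes> g) ` carrier G"
      by (intro image_eqI[of _ _ "x \<otimes> inv g"]) (simp_all add: m_assoc)
  qed (use assms(2) in auto)
  moreover have "map (conjugate G h) (map (conjugate G g) s) = map (conjugate G (h \<otimes> g)) s"
    if "h \<in> carrier G" for h
    using assms that by (auto simp: conjugate_conjugate)
  then have "tuple_class G (map (conjugate G g) s) = (\<lambda>h. map (conjugate G h) s) ` (\<lambda>h. h \<otimes> g) ` carrier G"
    unfolding tuple_class_conv image_image by (rule image_cong[OF refl])
  with \<open>(\<lambda>h. h \<otimes> g) ` carrier G = carrier G\<close> show ?thesis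
    by (simp add: tuple_class_conv)
qed

lemma tuple_class_eqD:
  assumes "tuple_class G s = tuple_class G t" "set t \<subseteq> carrier G"
  shows "\<exists>g \<in> carrier G. t = map (conjugate G g) s"
proof -
  have "t = map (conjugate G \<one>) t" using assms(2) by (simp add: map_idI subsetD)
  then have "t \<in> tuple_class G t" unfolding tuple_class_conv by blast
  with assms(1) show ?thesis unfolding tuple_class_conv by blast
qed

end

section \<open>Words in a quotient of the free product of C2 and C3\<close>

(* A word over a (True) and b (False); word_cons prepends a letter, cancelling aa and bbb. *)
fun word_cons :: "bool \<Rightarrow> bool list \<Rightarrow> bool list" where
  "word_cons True (True # w) = w"
| "word_cons False (False # False # w) = w"
| "word_cons x w = x # w"

definition word_reduce :: "bool list \<Rightarrow> bool list" where
  "word_reduce w = foldr word_cons w []"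

definition word_inv :: "bool list \<Rightarrow> bool list" where
  "word_inv w = concat (map (\<lambda>x. if x then [True] else [False, False]) (rev w))"

definition word_conj :: "bool list \<Rightarrow> bool list \<Rightarrow> bool list" where
  "word_conj g x = word_reduce (g @ x @ word_inv g)"

lemma word_reduce_Nil [simp]: "word_reduce [] = []"
  by (simp add: word_reduce_def)

lemma word_reduce_Cons [simp]: "word_reduce (x # w) = word_cons x (word_reduce w)"
  by (simp add: word_reduce_def)

lemma word_inv_Nil [simp]: "word_inv [] = []"
  by (simp add: word_inv_def)

lemma word_inv_Cons [simp]: "word_inv (x # w) = word_inv w @ (if x then [True] else [False, False])"
  by (simp add: word_inv_def)

definition hur_letter_word :: "nat \<times> bool \<Rightarrow> bool list list \<Rightarrow> bool list list" where
  "hur_letter_word l ws = (let i = fst l; u = ws ! (i - 2); v = ws ! (i - 1) in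
     if 2 \<le> i \<and> i \<le> length ws then
       (if snd l then ws[i - 2 := word_reduce (u @ v @ word_inv u), i - 1 := u]
        else ws[i - 2 := v, i - 1 := word_reduce (word_inv v @ u @ v)])
     else ws)"

locale C2_C3_pair = group G for G (structure) +
  fixes a b
  assumes a_closed [simp]: "a \<in> carrier G" and b_closed [simp]: "b \<in> carrier G"
    and a_square: "a \<otimes> a = \<one>" and b_cube: "b \<otimes> b \<otimes> b = \<one>"
begin

definition word_val :: "bool list \<Rightarrow> 'a" where
  "word_val w = foldr (\<lambda>x g. (if x then a else b) \<otimes> g) w \<one>"

lemma word_val_Nil [simp]: "word_val [] = \<one>"
  by (simp add: word_val_def)

lemma word_val_Cons: "word_val (x # w) = (if x then a else b) \<otimes> word_val w"
  by (simp add: word_val_def)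

lemma word_val_closed [simp]: "word_val w \<in> carrier G"
  by (induction w) (simp_all add: word_val_Cons)

lemma word_val_append: "word_val (u @ v) = word_val u \<otimes> word_val v"
  by (induction u) (simp_all add: word_val_Cons m_assoc)

lemma word_val_word_cons: "word_val (word_cons x w) = word_val (x # w)"
proof (induction x w rule: word_cons.induct)
  case (1 w)
  then show ?case using a_square by (simp add: word_val_Cons flip: m_assoc)
next
  case (2 w)
  then show ?case using b_cube by (simp add: word_val_Cons flip: m_assoc)
qed simp_all

lemma word_val_reduce [simp]: "word_val (word_reduce w) = word_val w"
  by (induction w) (simp_all add: word_val_word_cons word_val_Cons)

lemma word_val_inv: "word_val (word_inv w) = inv (word_val w)"
proof (induction w)
  case (Cons x w)
  have "inv a = a" using a_square by (simp add: inv_equality)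
  moreover have "inv b = b \<otimes> b" using b_cube by (simp add: inv_equality m_assoc)
  ultimately show ?case
    using Cons by (simp add: word_val_append word_val_Cons inv_mult_group)
qed simp

lemma word_val_conj: "word_val (word_conj g x) = conjugate G (word_val g) (word_val x)"
  by (simp add: word_conj_def conjugate_def word_val_append word_val_inv m_assoc)

lemma tuple_prod_word_val: "tuple_prod G (map word_val ws) = word_val (concat ws)"
  by (induction ws) (simp_all add: tuple_prod_def word_val_append)

lemma word_val_in_generate: "word_val w \<in> generate G {a, b}"
  by (induction w) (auto simp: word_val_Cons intro: generate.one generate.incl generate.eng)

lemma word_val_surj:
  assumes "generate G {a, b} = carrier G" "g \<in> carrier G"
  shows "\<exists>w. g = word_val w"
proof -
  have letters: "a = word_val [True]" "b = word_val [False]"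
    by (simp_all add: word_val_Cons)
  have "\<exists>w. g = word_val w" if "g \<in> generate G {a, b}" for g
    using that
  proof (induction rule: generate.induct)
    case one
    show ?case by (metis word_val_Nil)
  next
    case (incl h)
    with letters show ?case by blast
  next
    case (inv h)
    with letters show ?case by (metis empty_iff insert_iff word_val_inv)
  next
    case (eng h1 h2)
    then show ?case by (metis word_val_append)
  qed
  with assms show ?thesis by blast
qed

lemma center_eq_carrier_if_commute:
  assumes "generate G {a, b} = carrier G" "a \<otimes> b = b \<otimes> a"
  shows "center G = carrier G"
proof -
  have letter: "c \<otimes> word_val v = word_val v \<otimes> c" if c: "c \<in> {a, b}" for c v
  proof (induction v)
    case (Cons x v)
    define y where "y = (if x then a else b)"
    have cy: "c \<in> carrier G" "y \<in> carrier G" using c by (auto simp: y_def)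
    have "c \<otimes> y = y \<otimes> c" using c assms(2) by (auto simp: y_def)
    then have "c \<otimes> (y \<otimes> word_val v) = y \<otimes> (word_val v \<otimes> c)"
      using Cons cy by (metis m_assoc word_val_closed)
    with cy show ?case by (simp add: word_val_Cons y_def m_assoc)
  qed (use that in auto)
  have "word_val u \<otimes> word_val v = word_val v \<otimes> word_val u" for u v
  proof (induction u)
    case (Cons x u)
    define y where "y = (if x then a else b)"
    have y: "y \<in> carrier G" by (simp add: y_def)
    have "y \<otimes> word_val u \<otimes> word_val v = word_val v \<otimes> (y \<otimes> word_val u)"
      using Cons letter[of y v] y by (metis m_assoc word_val_closed insertI1 insertI2 y_def singletonI)
    then show ?case by (simp add: word_val_Cons y_def)
  qed simp
  then show ?thesis
    unfolding center_def using word_val_surj[OF assms(1)] by blast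
qed

lemma hur_letter_word_val: "hur_letter G l (map word_val ws) = map word_val (hur_letter_word l ws)"
proof (cases l ws rule: hur_letter_cases)
  case (in_range k)
  then have "map word_val ws ! k = word_val (ws ! k)" "map word_val ws ! Suc k = word_val (ws ! Suc k)"
    by simp_all
  with in_range show ?thesis
    by (cases "snd l") (simp_all add: hur_letter_True hur_letter_False hur_letter_word_def Let_def
        map_update word_val_append word_val_inv m_assoc)
next
  case out_of_range
  then show ?thesis
    by (auto simp: hur_letter_out_of_range hur_letter_word_def Let_def)
qed

lemma hur_word_word_val: "hur_word G w (map word_val ws) = map word_val (fold hur_letter_word w ws)"
  by (induction w arbitrary: ws) (simp_all add: hur_letter_word_val)

end

section \<open>The affine group ASL(2,3)\<close>

definition affine_F3 :: "int \<Rightarrow> int \<Rightarrow> int \<Rightarrow> int \<Rightarrow> int \<Rightarrow> int \<Rightarrow> int \<times> int \<Rightarrow> int \<times> int" where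
  "affine_F3 a b c d e f = restrict (\<lambda>(x, y). ((a * x + b * y + e) mod 3, (c * x + d * y + f) mod 3)) F3sq"

lemma mem_F3sq: "(x, y) \<in> F3sq \<longleftrightarrow> 0 \<le> x \<and> x < 3 \<and> 0 \<le> y \<and> y < 3"
  by (auto simp: F3sq_def)

lemma finite_F3sq: "finite F3sq"
  by (simp add: F3sq_def)

lemma card_F3sq: "card F3sq = 9"
  by (simp add: F3sq_def card_cartesian_product)

lemma affine_F3_apply:
  "(x, y) \<in> F3sq \<Longrightarrow> affine_F3 a b c d e f (x, y) = ((a * x + b * y + e) mod 3, (c * x + d * y + f) mod 3)"
  by (simp add: affine_F3_def)

lemma affine_F3_in_F3sq: "z \<in> F3sq \<Longrightarrow> affine_F3 a b c d e f z \<in> F3sq"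
  by (cases z) (simp add: affine_F3_apply mem_F3sq)

lemma affine_F3_extensional: "affine_F3 a b c d e f \<in> extensional F3sq"
  by (simp add: affine_F3_def)

lemma carrier_ASL23: "carrier ASL23 = {affine_F3 a b c d e f | a b c d e f. (a * d - b * c) mod 3 = 1}"
  by (simp add: ASL23_def affine_F3_def)

lemma F3sq_fun_eqI:
  "g \<in> extensional F3sq \<Longrightarrow> h \<in> extensional F3sq \<Longrightarrow> (\<And>x y. (x, y) \<in> F3sq \<Longrightarrow> g (x, y) = h (x, y)) \<Longrightarrow> g = h"
  by (metis extensionalityI surj_pair)

lemma affine_F3_cong:
  assumes "a mod 3 = a' mod 3" "b mod 3 = b' mod 3" "c mod 3 = c' mod 3" "d mod 3 = d' mod 3"
    "e mod 3 = e' mod 3" "f mod 3 = f' mod 3"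
  shows "affine_F3 a b c d e f = affine_F3 a' b' c' d' e' f'"
proof (rule F3sq_fun_eqI[OF affine_F3_extensional affine_F3_extensional])
  fix x y :: int
  have "(a * x + b * y + e) mod 3 = (a' * x + b' * y + e') mod 3"
    using assms by (intro mod_add_cong mod_mult_cong refl)
  moreover have "(c * x + d * y + f) mod 3 = (c' * x + d' * y + f') mod 3"
    using assms by (intro mod_add_cong mod_mult_cong refl)
  ultimately
  show "(x, y) \<in> F3sq \<Longrightarrow> affine_F3 a b c d e f (x, y) = affine_F3 a' b' c' d' e' f' (x, y)"
    by (simp add: affine_F3_apply)
qed

lemma compose_affine_F3:
  "compose F3sq (affine_F3 a b c d e f) (affine_F3 a' b' c' d' e' f') =
   affine_F3 (a * a' + b * c') (a * b' + b * d') (c * a' + d * c') (c * b' + d * d')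
     (a * e' + b * f' + e) (c * e' + d * f' + f)"
proof (rule F3sq_fun_eqI)
  fix x y :: int assume xy: "(x, y) \<in> F3sq"
  let ?u = "a' * x + b' * y + e'" and ?v = "c' * x + d' * y + f'"
  have "(?u mod 3, ?v mod 3) \<in> F3sq" by (simp add: mem_F3sq)
  moreover have "(p * (?u mod 3) + q * (?v mod 3) + r) mod 3 = (p * ?u + q * ?v + r) mod 3" for p q r
    by (intro mod_add_cong mod_mult_right_eq refl)
  ultimately show "compose F3sq (affine_F3 a b c d e f) (affine_F3 a' b' c' d' e' f') (x, y) =
      affine_F3 (a * a' + b * c') (a * b' + b * d') (c * a' + d * c') (c * b' + d * d')
        (a * e' + b * f' + e) (c * e' + d * f' + f) (x, y)"
    using xy by (simp add: compose_def affine_F3_apply algebra_simps)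
qed (simp_all add: compose_def affine_F3_extensional)

lemma affine_F3_id: "affine_F3 1 0 0 1 0 0 = (\<lambda>z \<in> F3sq. z)"
  by (rule F3sq_fun_eqI) (simp_all add: affine_F3_apply affine_F3_extensional mem_F3sq)

lemma det_mod3_mult:
  assumes "(a * d - b * c) mod 3 = (1::int)" "(a' * d' - b' * c') mod 3 = 1"
  shows "((a * a' + b * c') * (c * b' + d * d') - (a * b' + b * d') * (c * a' + d * c')) mod 3 = 1"
proof -
  have "(a * a' + b * c') * (c * b' + d * d') - (a * b' + b * d') * (c * a' + d * c')
      = (a * d - b * c) * (a' * d' - b' * c')"
    by (simp add: algebra_simps)
  also have "((a * d - b * c) * (a' * d' - b' * c')) mod 3
      = ((a * d - b * c) mod 3 * ((a' * d' - b' * c') mod 3)) mod 3"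
    by (rule mod_mult_eq[symmetric])
  finally show ?thesis using assms by simp
qed

lemma compose_affine_F3_adjugate:
  assumes det: "(a * d - b * c) mod 3 = 1"
  shows "compose F3sq (affine_F3 d (- b) (- c) a (b * f - d * e) (c * e - a * f)) (affine_F3 a b c d e f)
      = (\<lambda>z \<in> F3sq. z)" (is "?left")
    and "compose F3sq (affine_F3 a b c d e f) (affine_F3 d (- b) (- c) a (b * f - d * e) (c * e - a * f))
      = (\<lambda>z \<in> F3sq. z)" (is "?right")
proof -
  have "(1 - (a * d - b * c)) mod 3 = (1 - (a * d - b * c) mod 3) mod 3"
    by (rule mod_diff_right_eq[symmetric])
  then have "(1 - (a * d - b * c)) mod 3 = 0"
    using det by simp
  then have vanish: "(t * (1 - (a * d - b * c))) mod 3 = 0 mod 3" for t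
    using mod_mult_right_eq[of t "1 - (a * d - b * c)" 3] by simp
  show ?left
    unfolding compose_affine_F3 affine_F3_id[symmetric]
    by (rule affine_F3_cong) (simp_all add: det algebra_simps)
  have translation: "a * (b * f - d * e) + b * (c * e - a * f) + e = e * (1 - (a * d - b * c))"
    "c * (b * f - d * e) + d * (c * e - a * f) + f = f * (1 - (a * d - b * c))"
    by (simp_all add: algebra_simps)
  show ?right
    unfolding compose_affine_F3 translation affine_F3_id[symmetric]
  proof (intro affine_F3_cong)
    show "(e * (1 - (a * d - b * c))) mod 3 = 0 mod 3" "(f * (1 - (a * d - b * c))) mod 3 = 0 mod 3"
      by (rule vanish)+
  qed (simp_all add: det algebra_simps)
qed

lemma affine_F3_Bij:
  assumes "(a * d - b * c) mod 3 = 1"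
  shows "affine_F3 a b c d e f \<in> Bij F3sq"
proof -
  let ?f = "affine_F3 a b c d e f" and ?g = "affine_F3 d (- b) (- c) a (b * f - d * e) (c * e - a * f)"
  have "?g (?f z) = z" "?f (?g z) = z" if "z \<in> F3sq" for z
    using that fun_cong[OF compose_affine_F3_adjugate(1)[OF assms, where e=e and f=f], of z]
      fun_cong[OF compose_affine_F3_adjugate(2)[OF assms, where e=e and f=f], of z]
    by (simp_all add: compose_def)
  then have "bij_betw ?f F3sq F3sq"
    by (intro bij_betw_byWitness[where f'="?g"]) (auto simp: affine_F3_in_F3sq)
  then show ?thesis by (simp add: Bij_def affine_F3_extensional)
qed

lemma mult_BijGroup: "\<sigma> \<in> Bij S \<Longrightarrow> \<tau> \<in> Bij S \<Longrightarrow> \<sigma> \<otimes>\<^bsub>BijGroup S\<^esub> \<tau> = compose S \<sigma> \<tau>"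
  by (simp add: BijGroup_def)

lemma one_BijGroup: "\<one>\<^bsub>BijGroup S\<^esub> = (\<lambda>x \<in> S. x)"
  by (simp add: BijGroup_def)

lemma affine_F3_mult:
  assumes "(a * d - b * c) mod 3 = 1" "(a' * d' - b' * c') mod 3 = 1"
  shows "affine_F3 a b c d e f \<otimes>\<^bsub>BijGroup F3sq\<^esub> affine_F3 a' b' c' d' e' f' =
    affine_F3 (a * a' + b * c') (a * b' + b * d') (c * a' + d * c') (c * b' + d * d')
      (a * e' + b * f' + e) (c * e' + d * f' + f)"
  using assms by (simp add: mult_BijGroup affine_F3_Bij compose_affine_F3)

lemma affine_F3_in_ASL23: "(a * d - b * c) mod 3 = 1 \<Longrightarrow> affine_F3 a b c d e f \<in> carrier ASL23"
  unfolding carrier_ASL23 by blast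

lemma subgroup_ASL23: "subgroup (carrier ASL23) (BijGroup F3sq)"
proof (rule group.subgroupI[OF group_BijGroup])
  show "carrier ASL23 \<subseteq> carrier (BijGroup F3sq)"
    unfolding carrier_ASL23 by (auto simp: BijGroup_def intro: affine_F3_Bij)
  have "affine_F3 1 0 0 1 0 0 \<in> carrier ASL23"
    by (rule affine_F3_in_ASL23) simp
  then show "carrier ASL23 \<noteq> {}" by blast
next
  fix \<sigma> assume "\<sigma> \<in> carrier ASL23"
  then obtain a b c d e f where \<sigma>: "\<sigma> = affine_F3 a b c d e f" and det: "(a * d - b * c) mod 3 = 1"
    unfolding carrier_ASL23 by blast
  let ?\<tau> = "affine_F3 d (- b) (- c) a (b * f - d * e) (c * e - a * f)"
  have det': "(d * a - (- b) * (- c)) mod 3 = 1" using det by (simp add: algebra_simps)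
  have "?\<tau> \<otimes>\<^bsub>BijGroup F3sq\<^esub> \<sigma> = \<one>\<^bsub>BijGroup F3sq\<^esub>"
    using affine_F3_Bij[OF det] affine_F3_Bij[OF det']
    by (simp add: \<sigma> mult_BijGroup one_BijGroup compose_affine_F3_adjugate(1)[OF det])
  moreover have "\<sigma> \<in> carrier (BijGroup F3sq)" "?\<tau> \<in> carrier (BijGroup F3sq)"
    using affine_F3_Bij[OF det] affine_F3_Bij[OF det'] by (simp_all add: \<sigma> BijGroup_def)
  ultimately have "inv\<^bsub>BijGroup F3sq\<^esub> \<sigma> = ?\<tau>"
    by (rule group.inv_equality[OF group_BijGroup])
  then show "inv\<^bsub>BijGroup F3sq\<^esub> \<sigma> \<in> carrier ASL23"
    using affine_F3_in_ASL23[OF det'] by simp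
next
  fix \<sigma> \<tau> assume "\<sigma> \<in> carrier ASL23" "\<tau> \<in> carrier ASL23"
  then obtain a b c d e f a' b' c' d' e' f' where
    "\<sigma> = affine_F3 a b c d e f" and det: "(a * d - b * c) mod 3 = 1"
    and "\<tau> = affine_F3 a' b' c' d' e' f'" and det': "(a' * d' - b' * c') mod 3 = 1"
    unfolding carrier_ASL23 by blast
  then show "\<sigma> \<otimes>\<^bsub>BijGroup F3sq\<^esub> \<tau> \<in> carrier ASL23"
    using affine_F3_in_ASL23[OF det_mod3_mult[OF det det']] by (simp add: affine_F3_mult)
qed

lemma group_ASL23: "group ASL23"
  using subgroup.subgroup_is_group[OF subgroup_ASL23 group_BijGroup] by (simp add: ASL23_def)

definition perm_transport :: "('a \<Rightarrow> 'b) \<Rightarrow> 'a set \<Rightarrow> ('a \<Rightarrow> 'a) \<Rightarrow> 'b \<Rightarrow> 'b" where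
  "perm_transport h A \<sigma> = (\<lambda>y \<in> h ` A. h (\<sigma> (inv_into A h y)))"

lemma perm_transport_apply: "inj_on h A \<Longrightarrow> x \<in> A \<Longrightarrow> perm_transport h A \<sigma> (h x) = h (\<sigma> x)"
  by (simp add: perm_transport_def)

lemma perm_transport_Bij:
  assumes "inj_on h A" "\<sigma> \<in> Bij A"
  shows "perm_transport h A \<sigma> \<in> Bij (h ` A)"
proof -
  have h: "bij_betw h A (h ` A)" using assms(1) by (rule inj_on_imp_bij_betw)
  moreover have "bij_betw \<sigma> A A" using assms(2) by (simp add: Bij_def)
  ultimately have "bij_betw (h \<circ> (\<sigma> \<circ> inv_into A h)) (h ` A) (h ` A)"
    by (meson bij_betw_trans bij_betw_inv_into)
  then have "bij_betw (perm_transport h A \<sigma>) (h ` A) (h ` A)"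
    by (rule bij_betw_cong[THEN iffD1, rotated]) (simp add: perm_transport_def)
  then show ?thesis by (simp add: Bij_def perm_transport_def)
qed

lemma perm_transport_compose:
  assumes "inj_on h A" "\<sigma> \<in> Bij A" "\<tau> \<in> Bij A"
  shows "perm_transport h A (compose A \<sigma> \<tau>) = compose (h ` A) (perm_transport h A \<sigma>) (perm_transport h A \<tau>)"
proof (rule extensionalityI[of _ "h ` A"])
  fix y assume "y \<in> h ` A"
  then obtain x where x: "x \<in> A" "y = h x" by blast
  moreover have "\<tau> x \<in> A" using x assms(3) by (auto simp: Bij_def bij_betw_def)
  ultimately show "perm_transport h A (compose A \<sigma> \<tau>) y
      = compose (h ` A) (perm_transport h A \<sigma>) (perm_transport h A \<tau>) y"
    using assms(1) by (simp add: compose_def perm_transport_apply)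
qed (simp_all add: perm_transport_def compose_def)

lemma perm_transport_hom:
  "inj_on h A \<Longrightarrow> perm_transport h A \<in> hom (BijGroup A) (BijGroup (h ` A))"
  by (auto simp: hom_def BijGroup_def perm_transport_Bij perm_transport_compose compose_Bij)

lemma inj_on_perm_transport: "inj_on h A \<Longrightarrow> inj_on (perm_transport h A) (Bij A)"
proof (rule inj_onI)
  fix \<sigma> \<tau> assume h: "inj_on h A" and \<sigma>: "\<sigma> \<in> Bij A" and \<tau>: "\<tau> \<in> Bij A"
    and eq: "perm_transport h A \<sigma> = perm_transport h A \<tau>"
  show "\<sigma> = \<tau>"
  proof (rule extensionalityI[of _ A])
    fix x assume x: "x \<in> A"
    then have "h (\<sigma> x) = h (\<tau> x)"
      using h eq by (metis perm_transport_apply)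
    moreover have "\<sigma> x \<in> A" "\<tau> x \<in> A" using \<sigma> \<tau> x by (auto simp: Bij_def bij_betw_def)
    ultimately show "\<sigma> x = \<tau> x" using h by (simp add: inj_on_eq_iff)
  qed (use \<sigma> \<tau> in \<open>simp_all add: Bij_def\<close>)
qed

lemma iso_generate_perm_transport:
  assumes h: "inj_on h A" and S: "S \<subseteq> Bij A"
  shows "(BijGroup A)\<lparr>carrier := generate (BijGroup A) S\<rparr>
    \<cong> (BijGroup (h ` A))\<lparr>carrier := generate (BijGroup (h ` A)) (perm_transport h A ` S)\<rparr>"
proof -
  let ?\<Phi> = "perm_transport h A"
  interpret \<Phi>: group_hom "BijGroup A" "BijGroup (h ` A)" ?\<Phi>
    using perm_transport_hom[OF h] by (simp add: group_hom_def group_hom_axioms_def group_BijGroup)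
  have S': "S \<subseteq> carrier (BijGroup A)" using S by (simp add: BijGroup_def)
  have gen: "generate (BijGroup A) S \<subseteq> Bij A"
    using \<Phi>.G.generate_incl[OF S'] by (simp add: BijGroup_def)
  have "?\<Phi> ` generate (BijGroup A) S = generate (BijGroup (h ` A)) (?\<Phi> ` S)"
    using \<Phi>.generate_img[OF S'] by simp
  moreover have "inj_on ?\<Phi> (generate (BijGroup A) S)"
    using inj_on_perm_transport[OF h] gen by (rule inj_on_subset)
  moreover have "?\<Phi> (\<sigma> \<otimes>\<^bsub>BijGroup A\<^esub> \<tau>) = ?\<Phi> \<sigma> \<otimes>\<^bsub>BijGroup (h ` A)\<^esub> ?\<Phi> \<tau>"
    if "\<sigma> \<in> generate (BijGroup A) S" "\<tau> \<in> generate (BijGroup A) S" for \<sigma> \<tau>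
    using that gen by (intro \<Phi>.hom_mult) (auto simp: BijGroup_def)
  ultimately show ?thesis
    unfolding is_iso_def iso_def hom_def bij_betw_def by auto
qed

lemma orbit_eq_image_iterates:
  assumes "(f ^^ N) x = x" "0 < N"
  shows "{(f ^^ n) x | n. True} = (\<lambda>n. (f ^^ n) x) ` {0..<N}"
proof (intro equalityI subsetI)
  fix y assume "y \<in> {(f ^^ n) x | n. True}"
  then obtain n where "y = (f ^^ n) x" by blast
  then have "y = (f ^^ (n mod N)) x" using assms(1) by (simp add: funpow_mod_eq)
  then show "y \<in> (\<lambda>n. (f ^^ n) x) ` {0..<N}" using assms(2) by force
qed auto

fun iterates :: "('c \<Rightarrow> 'c) \<Rightarrow> nat \<Rightarrow> 'c \<Rightarrow> 'c list" where
  "iterates f 0 x = []"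
| "iterates f (Suc n) x = x # iterates f n (f x)"

lemma iterates_conv_map: "iterates f n x = map (\<lambda>k. (f ^^ k) x) [0..<n]"
  by (induction n arbitrary: x) (simp_all add: map_upt_Suc funpow_Suc_right del: funpow.simps upt_Suc)

definition cycle_sets :: "('c \<Rightarrow> 'c) \<Rightarrow> nat \<Rightarrow> 'c list \<Rightarrow> 'c set list" where
  "cycle_sets f N xs = remdups (map (\<lambda>x. set (iterates f N x)) xs)"

lemma cycle_type_cycle_sets:
  assumes "\<forall>x \<in> set xs. (f ^^ N) x = x" "0 < N"
  shows "cycle_type f (set xs) = mset (map card (cycle_sets f N xs))"
proof -
  have "cycles_of f (set xs) = (\<lambda>x. {(f ^^ n) x | n. True}) ` set xs"
    unfolding cycles_of_def by blast
  also have "\<dots> = (\<lambda>x. set (iterates f N x)) ` set xs"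
    using assms by (intro image_cong refl) (simp add: iterates_conv_map orbit_eq_image_iterates[simplified])
  also have "\<dots> = set (cycle_sets f N xs)"
    by (simp add: cycle_sets_def)
  finally have "cycles_of f (set xs) = set (cycle_sets f N xs)" .
  moreover have "mset_set (set (cycle_sets f N xs)) = mset (cycle_sets f N xs)"
    unfolding cycle_sets_def by (rule mset_set_set) simp
  ultimately show ?thesis
    unfolding cycle_type_def by simp
qed

lemma funpow_perm_transport:
  assumes "inj_on h A" "\<sigma> ` A \<subseteq> A" "x \<in> A"
  shows "(perm_transport h A \<sigma> ^^ n) (h x) = h ((\<sigma> ^^ n) x)"
proof -
  have "(\<sigma> ^^ n) x \<in> A" for n
    using assms(2,3) by (induction n) auto
  then show ?thesis
    using assms by (induction n) (simp_all add: perm_transport_apply)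
qed

lemma cycle_type_perm_transport:
  assumes h: "inj_on h A" and \<sigma>: "\<sigma> ` A \<subseteq> A" and A: "finite A"
  shows "cycle_type (perm_transport h A \<sigma>) (h ` A) = cycle_type \<sigma> A"
proof -
  let ?F = "perm_transport h A \<sigma>" and ?C = "cycles_of \<sigma> A"
  have orbit_in: "{(\<sigma> ^^ n) x | n. True} \<subseteq> A" if "x \<in> A" for x
  proof -
    have "(\<sigma> ^^ n) x \<in> A" for n using that \<sigma> by (induction n) auto
    then show ?thesis by blast
  qed
  have "cycles_of ?F (h ` A) = (\<lambda>x. {(?F ^^ n) (h x) | n. True}) ` A"
    unfolding cycles_of_def by blast
  also have "\<dots> = (\<lambda>x. h ` {(\<sigma> ^^ n) x | n. True}) ` A"
    by (rule image_cong) (auto simp: funpow_perm_transport[OF h \<sigma>])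
  also have "\<dots> = image h ` ?C"
    unfolding cycles_of_def by blast
  finally have cycles: "cycles_of ?F (h ` A) = image h ` ?C" .
  have sub: "S \<subseteq> A" if "S \<in> ?C" for S
    using that orbit_in unfolding cycles_of_def by blast
  have "inj_on (image h) ?C"
    using h sub by (auto simp: inj_on_def inj_on_image_eq_iff)
  then have "image_mset card (mset_set (image h ` ?C)) = image_mset (\<lambda>S. card (h ` S)) (mset_set ?C)"
    by (simp flip: image_mset_mset_set add: multiset.map_comp comp_def)
  also have "\<dots> = image_mset card (mset_set ?C)"
  proof (rule image_mset_cong)
    fix S assume "S \<in># mset_set ?C"
    moreover have "finite ?C" using A by (simp add: cycles_of_def)
    ultimately have "S \<subseteq> A" using sub by simp
    with h show "card (h ` S) = card S" by (meson card_image inj_on_subset)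
  qed
  finally show ?thesis
    unfolding cycle_type_def cycles .
qed

lemma num_cycles_eq_size_cycle_type: "num_cycles f A = size (cycle_type f A)"
  by (simp add: num_cycles_def cycle_type_def)

definition pure_braid_pairs :: "(nat \<times> nat) list" where
  "pure_braid_pairs = [(1, 2), (1, 3), (1, 4), (1, 5), (2, 3), (2, 4), (2, 5), (3, 4), (3, 5), (4, 5)]"

lemma set_pure_braid_pairs: "set pure_braid_pairs = {(i, j). 1 \<le> i \<and> i < j \<and> j \<le> 5}"
proof (intro equalityI subsetI)
  fix p assume "p \<in> {(i, j). 1 \<le> i \<and> i < j \<and> j \<le> (5::nat)}"
  then obtain i j where p: "p = (i, j)" "1 \<le> i" "i < j" "j \<le> 5" by blast
  then have "i = 1 \<or> i = 2 \<or> i = 3 \<or> i = 4" "j = 2 \<or> j = 3 \<or> j = 4 \<or> j = 5" by arith+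
  with p show "p \<in> set pure_braid_pairs"
    by (elim disjE) (simp_all add: pure_braid_pairs_def)
qed (auto simp: pure_braid_pairs_def)

definition F3_points :: "(int \<times> int) list" where
  "F3_points = [(0, 0), (0, 1), (0, 2), (1, 0), (1, 1), (1, 2), (2, 0), (2, 1), (2, 2)]"

lemma set_F3_points: "set F3_points = F3sq"
proof (intro equalityI subsetI)
  fix p assume "p \<in> F3sq"
  then obtain x y where p: "p = (x, y)" "0 \<le> x" "x < 3" "0 \<le> y" "y < 3"
    by (cases p) (auto simp: mem_F3sq)
  then have "x = 0 \<or> x = 1 \<or> x = 2" "y = 0 \<or> y = 1 \<or> y = 2" by arith+
  with p show "p \<in> set F3_points"
    by (elim disjE) (simp_all add: F3_points_def)
qed (auto simp: F3_points_def mem_F3sq)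

(* beta_ij acts on the labels by the affine map with parameters (a, b, c, d, e, f), i.e.
   v |-> [[a, b], [c, d]] v + (e, f). *)
definition braid_affine_table :: "((nat \<times> nat) \<times> (int \<times> int \<times> int \<times> int \<times> int \<times> int)) list" where
  "braid_affine_table =
    [((1, 2), (1, 0, 1, 1, 0, 1)), ((1, 3), (1, 2, 0, 1, 1, 0)), ((1, 4), (2, 2, 1, 0, 1, 1)),
     ((1, 5), (2, 0, 0, 2, 0, 1)), ((2, 3), (2, 2, 1, 0, 2, 2)), ((2, 4), (0, 2, 1, 2, 2, 1)),
     ((2, 5), (2, 0, 0, 2, 0, 0)), ((3, 4), (1, 0, 1, 1, 0, 0)), ((3, 5), (2, 0, 0, 2, 1, 1)),
     ((4, 5), (2, 0, 0, 2, 1, 2))]"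

definition braid_affine :: "nat \<Rightarrow> nat \<Rightarrow> int \<times> int \<Rightarrow> int \<times> int" where
  "braid_affine i j = (case the (map_of braid_affine_table (i, j)) of (a, b, c, d, e, f) \<Rightarrow> affine_F3 a b c d e f)"

lemma braid_affine_in_ASL23:
  assumes "1 \<le> i" "i < j" "j \<le> 5"
  shows "braid_affine i j \<in> carrier ASL23"
proof -
  have "(i, j) \<in> set pure_braid_pairs" using assms by (simp add: set_pure_braid_pairs)
  then show ?thesis
    by (auto simp: pure_braid_pairs_def braid_affine_def braid_affine_table_def intro: affine_F3_in_ASL23)
qed

lemma braid_affine_bij: "1 \<le> i \<Longrightarrow> i < j \<Longrightarrow> j \<le> 5 \<Longrightarrow> bij_betw (braid_affine i j) F3sq F3sq"
  using braid_affine_in_ASL23 subgroup.subset[OF subgroup_ASL23] by (auto simp: BijGroup_def Bij_def)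

definition point_index :: "int \<times> int \<Rightarrow> nat" where
  "point_index p = nat (3 * fst p + snd p)"

(* Representatives of the nine classes of the orbit, labelled by the points of F_3^2 via point_index. *)
definition orbit_reps :: "bool list list list" where
  "orbit_reps = [
    [[False,False,True], [True,False,False], [False,False,True], [False,False,True], [True,False,True]],
    [[True,False,False], [False,True,False], [False,False,True], [False,False,True], [True,False,True]],
    [[False,True,False], [False,False,True], [False,False,True], [False,False,True], [True,False,True]],
    [[True,False,True,False,True], [True,False,False], [True,False,False], [False,False,True], [True,False,True]],
    [[True,False,True,False,True], [True,False,False], [False,False,True], [True,False,True,False,True], [True,False,True]],
    [[False,False,True], [True,False,True,False,True], [False,False,True], [True,False,True,False,True], [True,False,True]],
    [[True,False,False], [True,False,False], [False,True,False], [False,False,True], [True,False,True]],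
    [[False,False,True], [False,False,True], [False,False,True], [True,False,True,False,True,False,True,False,False,True], [True,False,True]],
    [[True,False,False], [True,False,False], [False,False,True], [True,False,False], [True,False,True]]]"

definition orbit_rep :: "int \<times> int \<Rightarrow> bool list list" where
  "orbit_rep p = orbit_reps ! point_index p"

definition braid_conjugator_table :: "((nat \<times> nat) \<times> bool list list) list" where
  "braid_conjugator_table = [
    ((1, 2), [[], [], [], [True,False,False,True], [True,False,True], [], [], [], []]),
    ((1, 3), [[], [], [True,False,True], [], [], [True,False,True], [], [], [True,False,True]]),
    ((1, 4), [[], [], [], [True,False,False,True], [], [], [], [True,False,True], []]),
    ((1, 5), [[True,False], [False,False,True], [True,False,True,False,True,False], [True,False,False,True,False,False,True], [True,False,False], [True,False], [False,True], [True,False,True,False,True], [False,False,True]]),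
    ((2, 3), [[True,False,True], [True,False,False,True], [], [], [True,False,True], [True,False,True], [], [], [True,False,True]]),
    ((2, 4), [[], [True,False,True], [], [True,False,False,True], [], [], [], [], []]),
    ((2, 5), [[True,False,True,False,True,False], [True,False], [False,False,True], [True,False], [True,False], [False,False,True], [False,False,True], [True,False], [False,False,True]]),
    ((3, 4), [[], [], [], [], [True,False,True], [True,False,False,True], [], [True,False,True], [True,False,False,True]]),
    ((3, 5), [[False,True], [False,False,True], [False,True], [True,False], [True,False,False], [True,False,False], [True,False,False,True,False,False,True], [True,False,True,False,True], [False,True,False,True,False,True]]),
    ((4, 5), [[False,False,True], [False,False,True], [True], [True], [True,False], [True,False], [False,True], [True,False,True,False,True,False], [True,False,False]])]"

definition braid_conjugator :: "nat \<Rightarrow> nat \<Rightarrow> int \<times> int \<Rightarrow> bool list" where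
  "braid_conjugator i j p = the (map_of braid_conjugator_table (i, j)) ! point_index p"

(* The computational checks are stated through named predicates, so that code_simp evaluates them
   only on concrete arguments instead of unfolding them under the binders. *)
definition braid_step_ok :: "nat \<Rightarrow> nat \<Rightarrow> int \<times> int \<Rightarrow> bool" where
  "braid_step_ok i j p \<longleftrightarrow> map word_reduce (fold hur_letter_word (beta_word i j) (orbit_rep p))
     = map (word_conj (braid_conjugator i j p)) (orbit_rep (braid_affine i j p))"

lemma braid_step_table: "list_all (\<lambda>(i, j). list_all (braid_step_ok i j) F3_points) pure_braid_pairs"
  by code_simp

(* [False, False, True] and [True, False, True] are the words for s1 and s2 s1. *)
definition in_class_C :: "bool list \<Rightarrow> bool" where
  "in_class_C w \<longleftrightarrow> list_ex (\<lambda>g. word_conj g [False, False, True] = word_reduce w)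
     [[], [True], [False, True], [True, False, True], [True, False, True, False, True]]"

definition short_products :: "bool list list \<Rightarrow> bool list list" where
  "short_products ws = [word_reduce (ws ! i @ ws ! j). i \<leftarrow> [0..<length ws], j \<leftarrow> [0..<length ws]]
     @ [word_reduce (ws ! i @ ws ! j @ word_inv (ws ! i)). i \<leftarrow> [0..<length ws], j \<leftarrow> [0..<length ws]]"

definition admissible_tuple :: "bool list list \<Rightarrow> bool" where
  "admissible_tuple ws \<longleftrightarrow> length ws = 5 \<and> list_all in_class_C (take 4 ws) \<and> ws ! 4 = [True, False, True]
     \<and> word_reduce (concat ws) = [] \<and> [True] \<in> set (short_products ws) \<and> [False] \<in> set (short_products ws)"

lemma orbit_reps_admissible: "list_all (admissible_tuple \<circ> orbit_rep) F3_points"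
  by code_simp

definition commutator_word :: "bool list" where
  "commutator_word = [True, False, True, False, False]"

(* If entries i and j of x agree while a conjugate of y_i y_j^-1 reduces to ab(ba)^-1 \<noteq> 1,
   then x and y lie in different simultaneous conjugacy classes. *)
definition separated_at :: "bool list list \<Rightarrow> bool list list \<Rightarrow> nat \<Rightarrow> nat \<Rightarrow> bool" where
  "separated_at x y i j \<longleftrightarrow> word_reduce (x ! i) = word_reduce (x ! j)
     \<and> list_ex (\<lambda>g. word_reduce (g @ y ! i @ word_inv (y ! j) @ word_inv g) = commutator_word)
         [[], [True], [False], [False, False], [True, False], [False, False, True], [True, False, False, True]]"

definition separated :: "bool list list \<Rightarrow> bool list list \<Rightarrow> bool" where
  "separated x y \<longleftrightarrow> list_ex (\<lambda>i. list_ex (separated_at x y i) [0..<5]) [0..<5]"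

definition distinguishable :: "int \<times> int \<Rightarrow> int \<times> int \<Rightarrow> bool" where
  "distinguishable p q \<longleftrightarrow> p = q \<or> separated (orbit_rep p) (orbit_rep q) \<or> separated (orbit_rep q) (orbit_rep p)"

lemma orbit_reps_distinguishable: "list_all (\<lambda>p. list_all (distinguishable p) F3_points) F3_points"
  by code_simp

definition braid_cycles_ok :: "nat \<Rightarrow> nat \<Rightarrow> bool" where
  "braid_cycles_ok i j \<longleftrightarrow> (if j = 5
     then (\<forall>p \<in> set F3_points. (braid_affine i j ^^ 2) p = p)
       \<and> mset (map card (cycle_sets (braid_affine i j) 2 F3_points)) = {#1, 2, 2, 2, 2#}
     else (\<forall>p \<in> set F3_points. (braid_affine i j ^^ 3) p = p)
       \<and> mset (map card (cycle_sets (braid_affine i j) 3 F3_points)) = {#1, 1, 1, 3, 3#})"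

lemma braid_affine_cycles: "list_all (\<lambda>(i, j). braid_cycles_ok i j) pure_braid_pairs"
  by code_simp

lemma cycle_type_braid_affine:
  assumes "1 \<le> i" "i < j" "j \<le> 5"
  shows "cycle_type (braid_affine i j) F3sq = (if j = 5 then {#1, 2, 2, 2, 2#} else {#1, 1, 1, 3, 3#})"
proof -
  have "braid_cycles_ok i j"
    using braid_affine_cycles assms by (auto simp: list_all_iff set_pure_braid_pairs)
  then show ?thesis
    unfolding braid_cycles_ok_def set_F3_points[symmetric]
    by (auto simp: cycle_type_cycle_sets split: if_splits)
qed

section \<open>The affine maps of the pure braids generate ASL(2,3)\<close>

definition braid_affines :: "(int \<times> int \<Rightarrow> int \<times> int) set" where
  "braid_affines = {braid_affine i j | i j. 1 \<le> i \<and> i < j \<and> j \<le> 5}"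

abbreviation braid_affine_group :: "(int \<times> int \<Rightarrow> int \<times> int) set" where
  "braid_affine_group \<equiv> generate (BijGroup F3sq) braid_affines"

lemma braid_affine_in_group: "1 \<le> i \<Longrightarrow> i < j \<Longrightarrow> j \<le> 5 \<Longrightarrow> braid_affine i j \<in> braid_affine_group"
  by (auto simp: braid_affines_def intro: generate.incl)

lemma pow_in_braid_affine_group:
  "\<sigma> \<in> braid_affine_group \<Longrightarrow> \<sigma> [^]\<^bsub>BijGroup F3sq\<^esub> (n::nat) \<in> braid_affine_group"
  by (induction n) (auto intro: generate.one generate.eng)

lemma affine_F3_translation_pow:
  "affine_F3 1 0 0 1 e f [^]\<^bsub>BijGroup F3sq\<^esub> (n::nat) = affine_F3 1 0 0 1 (int n * e) (int n * f)"
  by (induction n) (simp_all add: one_BijGroup affine_F3_id affine_F3_mult algebra_simps)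

lemma affine_F3_upper_pow:
  "affine_F3 1 b 0 1 0 0 [^]\<^bsub>BijGroup F3sq\<^esub> (n::nat) = affine_F3 1 (int n * b) 0 1 0 0"
  by (induction n) (simp_all add: one_BijGroup affine_F3_id affine_F3_mult algebra_simps)

lemma affine_F3_lower_pow:
  "affine_F3 1 0 c 1 0 0 [^]\<^bsub>BijGroup F3sq\<^esub> (n::nat) = affine_F3 1 0 (int n * c) 1 0 0"
  by (induction n) (simp_all add: one_BijGroup affine_F3_id affine_F3_mult algebra_simps)

(* The maps of beta_35 and beta_45 composed with that of beta_25, which is -id, are the
   translations by (1, 1) and (1, 2); these generate all translations. *)
lemma translation_in_braid_affine_group: "affine_F3 1 0 0 1 e f \<in> braid_affine_group"
proof -
  have minus_id: "affine_F3 2 0 0 2 0 0 \<in> braid_affine_group"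
    using braid_affine_in_group[of 2 5] by (simp add: braid_affine_def braid_affine_table_def)
  have "affine_F3 2 0 0 2 1 1 \<otimes>\<^bsub>BijGroup F3sq\<^esub> affine_F3 2 0 0 2 0 0 \<in> braid_affine_group"
    using braid_affine_in_group[of 3 5] minus_id
    by (intro generate.eng) (simp_all add: braid_affine_def braid_affine_table_def)
  moreover have "affine_F3 2 0 0 2 1 1 \<otimes>\<^bsub>BijGroup F3sq\<^esub> affine_F3 2 0 0 2 0 0 = affine_F3 1 0 0 1 1 1"
    by (simp add: affine_F3_mult) (rule affine_F3_cong; simp)
  ultimately have t11: "affine_F3 1 0 0 1 1 1 \<in> braid_affine_group" by simp
  have "affine_F3 2 0 0 2 1 2 \<otimes>\<^bsub>BijGroup F3sq\<^esub> affine_F3 2 0 0 2 0 0 \<in> braid_affine_group"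
    using braid_affine_in_group[of 4 5] minus_id
    by (intro generate.eng) (simp_all add: braid_affine_def braid_affine_table_def)
  moreover have "affine_F3 2 0 0 2 1 2 \<otimes>\<^bsub>BijGroup F3sq\<^esub> affine_F3 2 0 0 2 0 0 = affine_F3 1 0 0 1 1 2"
    by (simp add: affine_F3_mult) (rule affine_F3_cong; simp)
  ultimately have t12: "affine_F3 1 0 0 1 1 2 \<in> braid_affine_group" by simp
  define m where "m = nat ((2 * e - f) mod 3)"
  define n where "n = nat ((f - e) mod 3)"
  have "affine_F3 1 0 0 1 1 1 [^]\<^bsub>BijGroup F3sq\<^esub> m \<otimes>\<^bsub>BijGroup F3sq\<^esub> affine_F3 1 0 0 1 1 2 [^]\<^bsub>BijGroup F3sq\<^esub> n
      = affine_F3 1 0 0 1 (int m + int n) (int m + 2 * int n)"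
    by (simp add: affine_F3_translation_pow affine_F3_mult algebra_simps)
  also have "\<dots> = affine_F3 1 0 0 1 e f"
  proof (rule affine_F3_cong)
    have mn: "int m = (2 * e - f) mod 3" "int n = (f - e) mod 3"
      by (simp_all add: m_def n_def)
    have "(int m + int n) mod 3 = ((2 * e - f) + (f - e)) mod 3"
      unfolding mn by (rule mod_add_eq)
    then show "(int m + int n) mod 3 = e mod 3" by simp
    have "(int m + 2 * int n) mod 3 = ((2 * e - f) + 2 * (f - e)) mod 3"
      unfolding mn by (intro mod_add_cong mod_mult_right_eq mod_mod_trivial)
    then show "(int m + 2 * int n) mod 3 = f mod 3" by simp
  qed simp_all
  finally show ?thesis
    using generate.eng[OF pow_in_braid_affine_group[OF t11, of m] pow_in_braid_affine_group[OF t12, of n]]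
    by (simp only:)
qed

lemma upper_in_braid_affine_group: "0 \<le> b \<Longrightarrow> affine_F3 1 b 0 1 0 0 \<in> braid_affine_group"
proof -
  assume b: "0 \<le> b"
  have "affine_F3 1 0 0 1 2 0 \<otimes>\<^bsub>BijGroup F3sq\<^esub> affine_F3 1 2 0 1 1 0 \<in> braid_affine_group"
    using translation_in_braid_affine_group braid_affine_in_group[of 1 3]
    by (intro generate.eng) (simp_all add: braid_affine_def braid_affine_table_def)
  moreover have "affine_F3 1 0 0 1 2 0 \<otimes>\<^bsub>BijGroup F3sq\<^esub> affine_F3 1 2 0 1 1 0 = affine_F3 1 2 0 1 0 0"
    by (simp add: affine_F3_mult) (rule affine_F3_cong; simp)
  ultimately have "affine_F3 1 2 0 1 0 0 [^]\<^bsub>BijGroup F3sq\<^esub> nat (2 * b) \<in> braid_affine_group"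
    by (intro pow_in_braid_affine_group) simp
  moreover have "affine_F3 1 2 0 1 0 0 [^]\<^bsub>BijGroup F3sq\<^esub> nat (2 * b) = affine_F3 1 b 0 1 0 0"
    unfolding affine_F3_upper_pow
  proof (rule affine_F3_cong)
    have "(4 * b) mod 3 = b mod 3" by (simp add: mod_eq_dvd_iff)
    with b show "(int (nat (2 * b)) * 2) mod 3 = b mod 3" by simp
  qed simp_all
  ultimately show ?thesis by simp
qed

lemma lower_in_braid_affine_group: "0 \<le> c \<Longrightarrow> affine_F3 1 0 c 1 0 0 \<in> braid_affine_group"
  using pow_in_braid_affine_group[OF braid_affine_in_group[of 3 4], of "nat c"]
  by (simp add: braid_affine_def braid_affine_table_def affine_F3_lower_pow)

(* A matrix [[a, b], [c, d]] of determinant 1 with c \<noteq> 0 factors as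
   [[1, u], [0, 1]] * [[1, 0], [c, 1]] * [[1, v], [0, 1]] with u = (a - 1)/c and v = (d - 1)/c;
   over F_3 we have 1/c = c. *)
lemma unipotent_factorisation_mod3:
  "\<forall>a \<in> {0, 1, 2::int}. \<forall>b \<in> {0, 1, 2::int}. \<forall>c \<in> {1, 2::int}. \<forall>d \<in> {0, 1, 2::int}.
     (a * d - b * c) mod 3 = 1 \<longrightarrow>
       (1 + ((a - 1) * c) mod 3 * c) mod 3 = a \<and>
       (((a - 1) * c) mod 3 + (1 + ((a - 1) * c) mod 3 * c) * (((d - 1) * c) mod 3)) mod 3 = b \<and>
       (c * (((d - 1) * c) mod 3) + 1) mod 3 = d"
  by simp

lemma mod3_cases: "(x::int) mod 3 \<in> {0, 1, 2}"
proof -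
  have "0 \<le> x mod 3" "x mod 3 < 3" by simp_all
  then show ?thesis by auto
qed

lemma linear_in_braid_affine_group_c_nonzero:
  assumes det: "(a * d - b * c) mod 3 = 1" and c: "c mod 3 \<noteq> 0"
  shows "affine_F3 a b c d 0 0 \<in> braid_affine_group"
proof -
  define a0 b0 c0 d0 where "a0 = a mod 3" "b0 = b mod 3" "c0 = c mod 3" "d0 = d mod 3"
  have ranges: "a0 \<in> {0, 1, 2}" "b0 \<in> {0, 1, 2}" "c0 \<in> {1, 2}" "d0 \<in> {0, 1, 2}"
    using mod3_cases[of a] mod3_cases[of b] mod3_cases[of c] mod3_cases[of d] c
    by (auto simp: a0_b0_c0_d0_def)
  have "(a0 * d0 - b0 * c0) mod 3 = (a * d - b * c) mod 3"
    unfolding a0_b0_c0_d0_def by (intro mod_diff_cong mod_mult_cong mod_mod_trivial)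
  then have det0: "(a0 * d0 - b0 * c0) mod 3 = 1" using det by simp
  define u v where "u = ((a0 - 1) * c0) mod 3" "v = ((d0 - 1) * c0) mod 3"
  have factors: "(1 + u * c0) mod 3 = a0" "(u + (1 + u * c0) * v) mod 3 = b0" "(c0 * v + 1) mod 3 = d0"
    using unipotent_factorisation_mod3 ranges det0 unfolding u_v_def by blast+
  have nonneg: "0 \<le> u" "0 \<le> v" "0 \<le> c0" by (simp_all add: u_v_def a0_b0_c0_d0_def)
  have "affine_F3 1 u 0 1 0 0 \<otimes>\<^bsub>BijGroup F3sq\<^esub> affine_F3 1 0 c0 1 0 0 \<otimes>\<^bsub>BijGroup F3sq\<^esub> affine_F3 1 v 0 1 0 0
      = affine_F3 (1 + u * c0) (u + (1 + u * c0) * v) c0 (c0 * v + 1) 0 0"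
    by (simp add: affine_F3_mult algebra_simps)
  also have "\<dots> = affine_F3 a b c d 0 0"
    by (rule affine_F3_cong) (simp_all only: factors, simp_all add: a0_b0_c0_d0_def)
  finally show ?thesis
    using generate.eng[OF generate.eng[OF upper_in_braid_affine_group[OF nonneg(1)]
          lower_in_braid_affine_group[OF nonneg(3)]] upper_in_braid_affine_group[OF nonneg(2)]]
    by (simp only:)
qed

lemma linear_in_braid_affine_group:
  assumes det: "(a * d - b * c) mod 3 = 1"
  shows "affine_F3 a b c d 0 0 \<in> braid_affine_group"
proof (cases "c mod 3 = 0")
  case False
  then show ?thesis using linear_in_braid_affine_group_c_nonzero[OF det] by simp
next
  case True
  have "(a * d - b * c) mod 3 = ((a mod 3) * d - b * (c mod 3)) mod 3"
    by (intro mod_diff_cong mod_mult_cong mod_mod_trivial[symmetric] refl)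
  then have "a mod 3 \<noteq> 0" using det True by auto
  moreover have "(a + c) mod 3 = (a mod 3 + c mod 3) mod 3" by (rule mod_add_eq[symmetric])
  ultimately have ac: "(a + c) mod 3 \<noteq> 0" using True by simp
  have det': "(a * (b + d) - b * (a + c)) mod 3 = 1" using det by (simp add: algebra_simps)
  have "affine_F3 1 0 2 1 0 0 \<otimes>\<^bsub>BijGroup F3sq\<^esub> affine_F3 a b (a + c) (b + d) 0 0
      = affine_F3 a b (3 * a + c) (3 * b + d) 0 0"
    using det' by (simp add: affine_F3_mult algebra_simps)
  also have "\<dots> = affine_F3 a b c d 0 0"
    by (rule affine_F3_cong) simp_all
  finally show ?thesis
    using generate.eng[OF lower_in_braid_affine_group[of 2] linear_in_braid_affine_group_c_nonzero[OF det' ac]]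
    by (simp only:)
qed

lemma braid_affine_group_eq_ASL23: "braid_affine_group = carrier ASL23"
proof
  show "braid_affine_group \<subseteq> carrier ASL23"
    using braid_affine_in_ASL23
    by (intro group.generate_subgroup_incl[OF group_BijGroup _ subgroup_ASL23]) (auto simp: braid_affines_def)
  show "carrier ASL23 \<subseteq> braid_affine_group"
  proof
    fix \<sigma> assume "\<sigma> \<in> carrier ASL23"
    then obtain a b c d e f where \<sigma>: "\<sigma> = affine_F3 a b c d e f" and det: "(a * d - b * c) mod 3 = 1"
      unfolding carrier_ASL23 by blast
    have "affine_F3 1 0 0 1 e f \<otimes>\<^bsub>BijGroup F3sq\<^esub> affine_F3 a b c d 0 0 = \<sigma>"
      using det by (simp add: \<sigma> affine_F3_mult)
    then show "\<sigma> \<in> braid_affine_group"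
      using generate.eng[OF translation_in_braid_affine_group[of e f] linear_in_braid_affine_group[OF det]]
      by (simp only:)
  qed
qed

section \<open>The orbit of length nine\<close>

context C2_C3_pair
begin

lemma word_val_in_class_C:
  assumes "in_class_C w"
  shows "word_val w \<in> conj_class G (word_val [False, False, True])"
proof -
  obtain g where "word_conj g [False, False, True] = word_reduce w"
    using assms by (auto simp: in_class_C_def list_ex_iff)
  then have "word_val w = conjugate G (word_val g) (word_val [False, False, True])"
    by (metis word_val_conj word_val_reduce)
  then show ?thesis by (simp add: conjugate_in_conj_class)
qed

lemma short_products_in_generate:
  assumes "u \<in> set (short_products ws)"
  shows "word_val u \<in> generate G (set (map word_val ws))"
proof -
  have "word_val (ws ! i) \<in> generate G (word_val ` set ws)"
    and "inv (word_val (ws ! i)) \<in> generate G (word_val ` set ws)" if "i < length ws" for i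
    using that by (auto intro: generate.incl generate.inv)
  with assms show ?thesis
    by (auto simp: short_products_def word_val_append word_val_inv intro!: generate.eng)
qed

end

locale C2_C3_generated = C2_C3_pair +
  assumes generated: "generate G {a, b} = carrier G"
    and not_commute: "a \<otimes> b \<noteq> b \<otimes> a"
begin

lemma word_val_commutator_word: "word_val commutator_word \<noteq> \<one>"
proof
  let ?x = "a \<otimes> (b \<otimes> b)"
  assume "word_val commutator_word = \<one>"
  then have "(a \<otimes> b) \<otimes> ?x = \<one>"
    by (simp add: commutator_word_def word_val_Cons m_assoc)
  then have ab: "inv ?x = a \<otimes> b" by (intro inv_equality) simp_all
  have "(b \<otimes> a) \<otimes> ?x = b \<otimes> ((a \<otimes> a) \<otimes> (b \<otimes> b))"
    by (simp add: m_assoc)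
  also have "\<dots> = \<one>"
    using a_square b_cube by (simp add: m_assoc)
  finally have ba: "inv ?x = b \<otimes> a" by (intro inv_equality) simp_all
  from ab ba not_commute show False by simp
qed

lemma tuple_class_neq_if_separated:
  assumes "separated x y" "length x = 5" "length y = 5"
  shows "tuple_class G (map word_val x) \<noteq> tuple_class G (map word_val y)"
proof
  assume "tuple_class G (map word_val x) = tuple_class G (map word_val y)"
  moreover have "set (map word_val y) \<subseteq> carrier G" by auto
  ultimately obtain h where "h \<in> carrier G" and conj: "map word_val y = map (conjugate G h) (map word_val x)"
    by (blast dest: tuple_class_eqD)
  obtain i j g where ij: "i < 5" "j < 5" and eq: "word_reduce (x ! i) = word_reduce (x ! j)"
    and comm: "word_reduce (g @ y ! i @ word_inv (y ! j) @ word_inv g) = commutator_word"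
    using assms(1) unfolding separated_def separated_at_def list_ex_iff set_upt by fastforce
  have "word_val (y ! k) = conjugate G h (word_val (x ! k))" if "k < 5" for k
    using arg_cong[OF conj, of "\<lambda>l. l ! k"] that assms(2,3) by simp
  moreover have "word_val (x ! i) = word_val (x ! j)"
    using arg_cong[OF eq, of word_val] by simp
  ultimately have "word_val (y ! i) = word_val (y ! j)" using ij by simp
  then have "word_val (y ! i) \<otimes> (inv (word_val (y ! j)) \<otimes> inv (word_val g)) = inv (word_val g)"
    by (simp flip: m_assoc)
  then have "word_val (g @ y ! i @ word_inv (y ! j) @ word_inv g) = \<one>"
    by (simp add: word_val_append word_val_inv)
  moreover have "word_val (g @ y ! i @ word_inv (y ! j) @ word_inv g) = word_val commutator_word"
    using arg_cong[OF comm, of word_val] by simp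
  ultimately show False using word_val_commutator_word by simp
qed

definition orbit_class :: "int \<times> int \<Rightarrow> 'a list set" where
  "orbit_class p = tuple_class G (map word_val (orbit_rep p))"

lemma inj_on_orbit_class: "inj_on orbit_class F3sq"
proof (rule inj_onI)
  fix p q assume "p \<in> F3sq" "q \<in> F3sq" and eq: "orbit_class p = orbit_class q"
  then have "distinguishable p q"
    using orbit_reps_distinguishable by (simp add: list_all_iff set_F3_points)
  moreover have "length (orbit_rep p) = 5" "length (orbit_rep q) = 5"
    using orbit_reps_admissible \<open>p \<in> F3sq\<close> \<open>q \<in> F3sq\<close>
    by (auto simp: list_all_iff set_F3_points admissible_tuple_def)
  ultimately show "p = q"
    using eq tuple_class_neq_if_separated unfolding distinguishable_def orbit_class_def by metis
qed

lemma hur_word_cls_orbit_class: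
  assumes "1 \<le> i" "i < j" "j \<le> 5" "p \<in> F3sq"
  shows "hur_word_cls G (beta_word i j) (orbit_class p) = orbit_class (braid_affine i j p)"
proof -
  let ?g = "braid_conjugator i j p" and ?q = "braid_affine i j p"
  have "braid_step_ok i j p"
    using braid_step_table assms by (auto simp: list_all_iff set_pure_braid_pairs set_F3_points)
  then have "map word_val (map word_reduce (fold hur_letter_word (beta_word i j) (orbit_rep p)))
      = map word_val (map (word_conj ?g) (orbit_rep ?q))"
    unfolding braid_step_ok_def by (rule arg_cong)
  then have step: "hur_word G (beta_word i j) (map word_val (orbit_rep p))
      = map (conjugate G (word_val ?g)) (map word_val (orbit_rep ?q))"
    by (simp add: hur_word_word_val word_val_conj comp_def)
  have "hur_word_cls G (beta_word i j) (orbit_class p)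
      = tuple_class G (hur_word G (beta_word i j) (map word_val (orbit_rep p)))"
    by (simp add: orbit_class_def hur_word_cls_tuple_class subset_eq)
  also have "\<dots> = orbit_class ?q"
    unfolding step orbit_class_def by (rule tuple_class_map_conjugate) auto
  finally show ?thesis .
qed

lemma pure_orbit_subset: "pure_orbit G 5 (orbit_class (0, 0)) \<subseteq> orbit_class ` F3sq"
proof
  fix Y assume "Y \<in> pure_orbit G 5 (orbit_class (0, 0))"
  then show "Y \<in> orbit_class ` F3sq"
  proof (induction rule: pure_orbit.induct)
    case base
    show ?case by (simp add: mem_F3sq)
  next
    case (step Y i j)
    then obtain p where "p \<in> F3sq" "Y = orbit_class p" by blast
    with step.hyps(2-4) show ?case
      using bij_betw_apply[OF braid_affine_bij] by (simp add: hur_word_cls_orbit_class)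
  next
    case (step_inv Y i j)
    then obtain p where "p \<in> F3sq" "Y = orbit_class p" by blast
    moreover obtain q where "q \<in> F3sq" "p = braid_affine i j q"
      using braid_affine_bij[OF step_inv.hyps(2-4)] \<open>p \<in> F3sq\<close> by (metis bij_betw_iff_bijections)
    ultimately have "Y = hur_word_cls G (beta_word i j) (orbit_class q)"
      using step_inv.hyps(2-4) by (simp add: hur_word_cls_orbit_class)
    then have "hur_word_cls G (inv_word (beta_word i j)) Y = orbit_class q"
      by (simp add: orbit_class_def hur_word_cls_inv_word subset_eq)
    with \<open>q \<in> F3sq\<close> show ?case by simp
  qed
qed

lemma orbit_class_in_pure_orbit: "orbit_class ` F3sq \<subseteq> pure_orbit G 5 (orbit_class (0, 0))"
proof -
  let ?O = "pure_orbit G 5 (orbit_class (0, 0))"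
  have step: "orbit_class (braid_affine i j p) \<in> ?O"
    if "orbit_class p \<in> ?O" "p \<in> F3sq" "1 \<le> i" "i < j" "j \<le> 5" for p i j
    using pure_orbit.step[OF that(1,3-5)] that(2-5) by (simp add: hur_word_cls_orbit_class)
  have "orbit_class (0, 0) \<in> ?O" by (rule pure_orbit.base)
  then have "orbit_class (0, 1) \<in> ?O" "orbit_class (1, 0) \<in> ?O" "orbit_class (1, 1) \<in> ?O"
    "orbit_class (2, 2) \<in> ?O" "orbit_class (2, 1) \<in> ?O" "orbit_class (1, 2) \<in> ?O"
    using step[of "(0, 0)" 1 2] step[of "(0, 0)" 1 3] step[of "(0, 0)" 1 4]
      step[of "(0, 0)" 2 3] step[of "(0, 0)" 2 4] step[of "(0, 0)" 4 5]
    by (simp_all add: braid_affine_def braid_affine_table_def affine_F3_def mem_F3sq)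
  moreover from this have "orbit_class (0, 2) \<in> ?O" "orbit_class (2, 0) \<in> ?O"
    using step[of "(0, 1)" 1 2] step[of "(1, 0)" 1 3]
    by (simp_all add: braid_affine_def braid_affine_table_def affine_F3_def mem_F3sq)
  ultimately show ?thesis
    using \<open>orbit_class (0, 0) \<in> ?O\<close> by (auto simp flip: set_F3_points simp: F3_points_def)
qed

lemma pure_orbit_eq: "pure_orbit G 5 (orbit_class (0, 0)) = orbit_class ` F3sq"
  using pure_orbit_subset orbit_class_in_pure_orbit by (rule equalityI)

lemma generate_eq_carrier_if_short_products:
  assumes "[True] \<in> set (short_products ws)" "[False] \<in> set (short_products ws)"
  shows "generate G (set (map word_val ws)) = carrier G"
proof
  let ?s = "map word_val ws"
  have "word_val [True] \<in> generate G (set ?s)" "word_val [False] \<in> generate G (set ?s)"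
    using assms short_products_in_generate by blast+
  then have "{a, b} \<subseteq> generate G (set ?s)"
    by (simp add: word_val_Cons)
  moreover have "subgroup (generate G (set ?s)) G"
    by (rule generate_is_subgroup) auto
  ultimately show "carrier G \<subseteq> generate G (set ?s)"
    using generate_subgroup_incl generated by metis
qed (rule generate_incl, auto)

lemma admissible_tuple_in_Sigma_i:
  assumes adm: "admissible_tuple ws"
  shows "tuple_class G (map word_val ws) \<in> Sigma_i G
    [conj_class G (word_val [False, False, True]), conj_class G (word_val [False, False, True]),
     conj_class G (word_val [False, False, True]), conj_class G (word_val [False, False, True]),
     conj_class G (word_val [True, False, True])]"
    (is "_ \<in> Sigma_i G ?Cs")
proof -
  let ?s = "map word_val ws"
  have len: "length ?s = 5" using adm by (simp add: admissible_tuple_def)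
  have "?s ! k \<in> ?Cs ! k" if "k < 5" for k
  proof (cases "k = 4")
    case True
    then show ?thesis
      using adm by (simp add: admissible_tuple_def self_in_conj_class)
  next
    case False
    with that have "k < 4" by simp
    then have "take 4 ws ! k \<in> set (take 4 ws)" using len by (intro nth_mem) simp
    then have "word_val (ws ! k) \<in> conj_class G (word_val [False, False, True])"
      using adm \<open>k < 4\<close> by (simp add: admissible_tuple_def list_all_iff word_val_in_class_C)
    moreover have "k = 0 \<or> k = 1 \<or> k = 2 \<or> k = 3" using \<open>k < 4\<close> by arith
    ultimately show ?thesis using len by auto
  qed
  moreover have "generate G (set ?s) = carrier G"
    using adm by (intro generate_eq_carrier_if_short_products) (simp_all add: admissible_tuple_def)
  moreover have "tuple_prod G ?s = \<one>"
  proof -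
    have "word_reduce (concat ws) = []" using adm by (simp add: admissible_tuple_def)
    then have "word_val (concat ws) = \<one>" by (metis word_val_Nil word_val_reduce)
    then show ?thesis by (simp add: tuple_prod_word_val)
  qed
  ultimately show ?thesis
    unfolding Sigma_i_def using len by (intro CollectI exI[of _ ?s]) auto
qed

lemma orbit_class_in_Sigma_i:
  "p \<in> F3sq \<Longrightarrow> orbit_class p \<in> Sigma_i G
    [conj_class G (word_val [False, False, True]), conj_class G (word_val [False, False, True]),
     conj_class G (word_val [False, False, True]), conj_class G (word_val [False, False, True]),
     conj_class G (word_val [True, False, True])]"
  using orbit_reps_admissible unfolding orbit_class_def
  by (intro admissible_tuple_in_Sigma_i) (simp add: list_all_iff set_F3_points)

lemma rho_beta_eq_perm_transport:
  assumes "1 \<le> i" "i < j" "j \<le> 5"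
  shows "rho_beta G (orbit_class ` F3sq) i j = perm_transport orbit_class F3sq (braid_affine i j)"
proof (rule extensionalityI[of _ "orbit_class ` F3sq"])
  fix Y assume "Y \<in> orbit_class ` F3sq"
  then obtain p where "p \<in> F3sq" "Y = orbit_class p" by blast
  with assms show "rho_beta G (orbit_class ` F3sq) i j Y = perm_transport orbit_class F3sq (braid_affine i j) Y"
    by (simp add: rho_beta_def hur_word_cls_orbit_class perm_transport_apply inj_on_orbit_class)
qed (simp_all add: rho_beta_def perm_transport_def)

lemma cycle_type_rho_beta:
  assumes "1 \<le> i" "i < j" "j \<le> 5"
  shows "cycle_type (rho_beta G (orbit_class ` F3sq) i j) (orbit_class ` F3sq)
    = (if j = 5 then {#1, 2, 2, 2, 2#} else {#1, 1, 1, 3, 3#})"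
  using cycle_type_perm_transport[OF inj_on_orbit_class _ finite_F3sq] bij_betw_imp_surj_on[OF braid_affine_bij]
    cycle_type_braid_affine assms
  by (simp add: rho_beta_eq_perm_transport)

lemma rho_image_iso_ASL23: "rho_image G 5 (orbit_class ` F3sq) \<cong> ASL23"
proof -
  have "braid_affines \<subseteq> Bij F3sq"
    using braid_affine_in_ASL23 subgroup.subset[OF subgroup_ASL23]
    by (auto simp: braid_affines_def BijGroup_def)
  then have "(BijGroup F3sq)\<lparr>carrier := braid_affine_group\<rparr>
      \<cong> (BijGroup (orbit_class ` F3sq))\<lparr>carrier := generate (BijGroup (orbit_class ` F3sq))
          (perm_transport orbit_class F3sq ` braid_affines)\<rparr>"
    by (rule iso_generate_perm_transport[OF inj_on_orbit_class])
  moreover have "(BijGroup F3sq)\<lparr>carrier := braid_affine_group\<rparr> = ASL23"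
    by (simp add: braid_affine_group_eq_ASL23 ASL23_def)
  moreover have "perm_transport orbit_class F3sq ` braid_affines
      = {rho_beta G (orbit_class ` F3sq) i j | i j. 1 \<le> i \<and> i < j \<and> j \<le> 5}"
  proof (intro equalityI subsetI)
    fix \<sigma> assume "\<sigma> \<in> perm_transport orbit_class F3sq ` braid_affines"
    then obtain i j where ij: "1 \<le> i" "i < j" "j \<le> 5"
      and "\<sigma> = perm_transport orbit_class F3sq (braid_affine i j)"
      unfolding braid_affines_def by blast
    then have "\<sigma> = rho_beta G (orbit_class ` F3sq) i j" by (simp add: rho_beta_eq_perm_transport)
    with ij show "\<sigma> \<in> {rho_beta G (orbit_class ` F3sq) i j | i j. 1 \<le> i \<and> i < j \<and> j \<le> 5}"
      by blast
  next
    fix \<sigma> assume "\<sigma> \<in> {rho_beta G (orbit_class ` F3sq) i j | i j. 1 \<le> i \<and> i < j \<and> j \<le> 5}"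
    then obtain i j where ij: "1 \<le> i" "i < j" "j \<le> 5" and "\<sigma> = rho_beta G (orbit_class ` F3sq) i j"
      by blast
    then have "\<sigma> = perm_transport orbit_class F3sq (braid_affine i j)" by (simp add: rho_beta_eq_perm_transport)
    with ij show "\<sigma> \<in> perm_transport orbit_class F3sq ` braid_affines"
      unfolding braid_affines_def by blast
  qed
  ultimately have "ASL23 \<cong> rho_image G 5 (orbit_class ` F3sq)"
    unfolding rho_image_def by (simp only:)
  then show ?thesis by (rule group.iso_sym[OF group_ASL23])
qed

lemma card_orbit: "card (orbit_class ` F3sq) = 9"
  using card_image[OF inj_on_orbit_class] by (simp add: card_F3sq)

lemma genus_orbit: "genus G 5 (orbit_class ` F3sq) = 0"
proof -
  have "real (num_cycles (rho_beta G (orbit_class ` F3sq) 1 j) (orbit_class ` F3sq)) = 5" if "j \<in> {2..5}" for j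
    using cycle_type_rho_beta[of 1 j] that by (auto simp: num_cycles_eq_size_cycle_type)
  then have "(\<Sum>j = 2..5. real (num_cycles (rho_beta G (orbit_class ` F3sq) 1 j) (orbit_class ` F3sq))) = 20"
    by simp
  then show ?thesis by (simp add: genus_def card_orbit)
qed

end

locale braid_pair = group G for G (structure) +
  fixes s1 s2
  assumes s1_closed [simp]: "s1 \<in> carrier G" and s2_closed [simp]: "s2 \<in> carrier G"
    and braid: "s1 \<otimes> s2 \<otimes> s1 = s2 \<otimes> s1 \<otimes> s2"
    and involution: "(s1 \<otimes> s2 \<otimes> s1) \<otimes> (s1 \<otimes> s2 \<otimes> s1) = \<one>"

sublocale braid_pair \<subseteq> C2_C3_pair G "s1 \<otimes> s2 \<otimes> s1" "s1 \<otimes> s2"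
proof
  have "(s1 \<otimes> s2) \<otimes> (s1 \<otimes> s2) \<otimes> (s1 \<otimes> s2) = (s1 \<otimes> s2 \<otimes> s1) \<otimes> (s2 \<otimes> s1 \<otimes> s2)"
    by (simp add: m_assoc)
  then show "(s1 \<otimes> s2) \<otimes> (s1 \<otimes> s2) \<otimes> (s1 \<otimes> s2) = \<one>"
    by (simp add: involution flip: braid)
qed (simp_all add: involution)

context braid_pair
begin

lemma word_val_s1: "word_val [False, False, True] = s1"
proof -
  have "word_val [False, False, True] = (s1 \<otimes> s2) \<otimes> ((s1 \<otimes> s2) \<otimes> ((s1 \<otimes> s2 \<otimes> s1) \<otimes> \<one>))"
    by (simp only: word_val_Cons word_val_Nil if_True if_False)
  also have "\<dots> = (s1 \<otimes> s2 \<otimes> s1) \<otimes> (s2 \<otimes> s1 \<otimes> s2) \<otimes> s1"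
    by (simp add: m_assoc)
  also have "\<dots> = s1"
    by (simp add: involution flip: braid)
  finally show ?thesis .
qed

lemma word_val_s2: "word_val [True, False, False] = s2"
proof -
  have "word_val [True, False, False] = (s1 \<otimes> s2 \<otimes> s1) \<otimes> ((s1 \<otimes> s2) \<otimes> ((s1 \<otimes> s2) \<otimes> \<one>))"
    by (simp only: word_val_Cons word_val_Nil if_True if_False)
  also have "\<dots> = (s2 \<otimes> s1 \<otimes> s2) \<otimes> ((s1 \<otimes> s2) \<otimes> ((s1 \<otimes> s2) \<otimes> \<one>))"
    by (simp only: braid)
  also have "\<dots> = s2 \<otimes> ((s1 \<otimes> s2 \<otimes> s1) \<otimes> (s2 \<otimes> s1 \<otimes> s2))"
    by (simp add: m_assoc)
  also have "\<dots> = s2"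
    by (simp add: involution flip: braid)
  finally show ?thesis .
qed

lemma word_val_s2_s1: "word_val [True, False, True] = s2 \<otimes> s1"
proof -
  have "word_reduce ([True, False, False] @ [False, False, True]) = [True, False, True]"
    by simp
  then show ?thesis
    by (metis word_val_append word_val_reduce word_val_s1 word_val_s2)
qed

lemma generate_C2_C3_eq: "generate G {s1 \<otimes> s2 \<otimes> s1, s1 \<otimes> s2} = generate G {s1, s2}"
proof
  have "{s1 \<otimes> s2 \<otimes> s1, s1 \<otimes> s2} \<subseteq> generate G {s1, s2}"
    by (auto intro!: generate.eng intro: generate.incl)
  then show "generate G {s1 \<otimes> s2 \<otimes> s1, s1 \<otimes> s2} \<subseteq> generate G {s1, s2}"
    by (intro generate_subgroup_incl generate_is_subgroup) auto
  have "{s1, s2} \<subseteq> generate G {s1 \<otimes> s2 \<otimes> s1, s1 \<otimes> s2}"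
    using word_val_in_generate[of "[False, False, True]"] word_val_in_generate[of "[True, False, False]"]
    by (simp add: word_val_s1 word_val_s2)
  then show "generate G {s1, s2} \<subseteq> generate G {s1 \<otimes> s2 \<otimes> s1, s1 \<otimes> s2}"
    by (intro generate_subgroup_incl generate_is_subgroup) auto
qed

end

theorem theorem10:
  fixes G :: "('a, 'b) monoid_scheme" and s1 s2 :: 'a
  assumes "group G"
    and "finite (carrier G)"
    and "carrier G \<noteq> {\<one>\<^bsub>G\<^esub>}"
    and "center G = {\<one>\<^bsub>G\<^esub>}"
    and "s1 \<in> carrier G" and "s2 \<in> carrier G"
    and "generate G {s1, s2} = carrier G"
    and "group.ord G (s1 \<otimes>\<^bsub>G\<^esub> s2 \<otimes>\<^bsub>G\<^esub> s1) = 2"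
    and "s1 \<otimes>\<^bsub>G\<^esub> s2 \<otimes>\<^bsub>G\<^esub> s1 = s2 \<otimes>\<^bsub>G\<^esub> s1 \<otimes>\<^bsub>G\<^esub> s2"
  shows "let C = conj_class G s1; D = conj_class G (s2 \<otimes>\<^bsub>G\<^esub> s1);
             Z = pure_orbit G 5 (tuple_class G [s1, s2, s1, s1, s2 \<otimes>\<^bsub>G\<^esub> s1])
         in Z \<subseteq> Sigma_i G [C, C, C, C, D]
          \<and> card Z = 9
          \<and> (\<forall>i j. 1 \<le> i \<and> i < j \<and> j \<le> 4 \<longrightarrow>
                 cycle_type (rho_beta G Z i j) Z = {#1, 1, 1, 3, 3#})
          \<and> (\<forall>i. 1 \<le> i \<and> i < 5 \<longrightarrow>
                 cycle_type (rho_beta G Z i 5) Z = {#1, 2, 2, 2, 2#})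
          \<and> rho_image G 5 Z \<cong> ASL23
          \<and> genus G 5 Z = 0"
proof -
  let ?a = "s1 \<otimes>\<^bsub>G\<^esub> s2 \<otimes>\<^bsub>G\<^esub> s1" and ?b = "s1 \<otimes>\<^bsub>G\<^esub> s2"
  interpret group G by fact
  have "?a [^]\<^bsub>G\<^esub> (2::nat) = \<one>\<^bsub>G\<^esub>"
    using pow_ord_eq_1[of ?a] assms(5,6,8) by simp
  then interpret braid_pair G s1 s2
    using assms(5,6,9) by unfold_locales (simp_all add: numeral_2_eq_2)
  have generated: "generate G {?a, ?b} = carrier G"
    using generate_C2_C3_eq assms(7) by simp
  interpret C2_C3_generated G ?a ?b
    using center_eq_carrier_if_commute[OF generated] assms(3,4) generated by unfold_locales auto
  have "tuple_class G [s1, s2, s1, s1, s2 \<otimes>\<^bsub>G\<^esub> s1] = orbit_class (0, 0)"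
    by (simp add: orbit_class_def orbit_rep_def orbit_reps_def point_index_def
        word_val_s1 word_val_s2 word_val_s2_s1)
  then show ?thesis
    using orbit_class_in_Sigma_i card_orbit cycle_type_rho_beta rho_image_iso_ASL23 genus_orbit
    unfolding Let_def word_val_s1 word_val_s2_s1 by (auto simp: pure_orbit_eq)
qed

end
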